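(* Let $\Omega\subseteq\mathbb{C}$ be a domain, let $\omega\in H(\Omega)$ and let $\varphi:\Omega\to\Omega$ be holomorphic. Then the weighted composition operator $C_{\omega,\varphi}:H(\Omega)\to H(\Omega)$, $f\mapsto\omega\cdot(f\circ\varphi)$, does not support a supercyclic algebra.
   Context: $H(\Omega)$ is the Fréchet algebra of holomorphic functions on $\Omega$ with the compact-open topology. A vector $f$ is supercyclic for an operator $T$ if $\{\lambda T^nf:\lambda\in\mathbb{C},n\ge0\}$ is dense. $T$ supports a supercyclic algebra if there is a subalgebra $A\ne\{0\}$ of $H(\Omega)$ all of whose nonzero elements are supercyclic for $T$. *)

theory Defs
  imports "HOL-Analysis.Analysis"
begin

text \<open>Elements of H(Omega) are represented by functions complex => complex that are
holomorphic on Omega; only their values on Omega matter.\<close>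

definition wcomp :: "(complex \<Rightarrow> complex) \<Rightarrow> (complex \<Rightarrow> complex) \<Rightarrow>
    (complex \<Rightarrow> complex) \<Rightarrow> (complex \<Rightarrow> complex)" where
  "wcomp \<omega> \<phi> f = (\<lambda>z. \<omega> z * f (\<phi> z))"

definition dense_H :: "complex set \<Rightarrow> (complex \<Rightarrow> complex) set \<Rightarrow> bool" where
  "dense_H \<Omega> S \<longleftrightarrow>
     (\<forall>g K e. g holomorphic_on \<Omega> \<longrightarrow> compact K \<longrightarrow> K \<subseteq> \<Omega> \<longrightarrow> e > 0 \<longrightarrow>
        (\<exists>h\<in>S. \<forall>z\<in>K. cmod (h z - g z) < e))"

definition supercyclic :: "complex set \<Rightarrow> ((complex \<Rightarrow> complex) \<Rightarrow> (complex \<Rightarrow> complex))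
    \<Rightarrow> (complex \<Rightarrow> complex) \<Rightarrow> bool" where
  "supercyclic \<Omega> T f \<longleftrightarrow>
     dense_H \<Omega> {(\<lambda>z. c * (T ^^ n) f z) | c n. True}"

definition subalgebra_H :: "complex set \<Rightarrow> (complex \<Rightarrow> complex) set \<Rightarrow> bool" where
  "subalgebra_H \<Omega> A \<longleftrightarrow>
     (\<forall>f\<in>A. f holomorphic_on \<Omega>) \<and> (\<lambda>z. 0) \<in> A \<and>
     (\<forall>f\<in>A. \<forall>g\<in>A. (\<lambda>z. f z + g z) \<in> A) \<and>
     (\<forall>f\<in>A. \<forall>c. (\<lambda>z. c * f z) \<in> A) \<and>
     (\<forall>f\<in>A. \<forall>g\<in>A. (\<lambda>z. f z * g z) \<in> A)"

definition supports_supercyclic_algebra :: "complex set \<Rightarrow>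
    ((complex \<Rightarrow> complex) \<Rightarrow> (complex \<Rightarrow> complex)) \<Rightarrow> bool" where
  "supports_supercyclic_algebra \<Omega> T \<longleftrightarrow>
     (\<exists>A. subalgebra_H \<Omega> A \<and> (\<exists>f\<in>A. \<exists>z\<in>\<Omega>. f z \<noteq> 0) \<and>
          (\<forall>f\<in>A. (\<exists>z\<in>\<Omega>. f z \<noteq> 0) \<longrightarrow> supercyclic \<Omega> T f))"

end

theory Submission
  imports Defs
begin

(* If f is a nonzero element of a supercyclic algebra for T = wcomp \<omega> \<phi>, then so is u = f^2,
   and T^n u = W_n * (f \<circ> \<phi>^n)^2 with W_n = \<Prod>k<n. \<omega> \<circ> \<phi>^k.  On a closed disc where W_n has
   no zeros, W_n has a continuous square root, so c * T^n u is the square of a continuous function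
   there and cannot approximate z - a on the boundary circle: z - a has no approximate continuous
   square root on a circle around a.  If W_n has zeros, then \<omega> has a zero z1 and n \<ge> 1, so
   T^n u vanishes at z1, which is far from a; adding z1 to the compact set rules out the
   approximation in this case too. *)

lemma no_approximate_sqrt_on_sphere:
  fixes q :: "complex \<Rightarrow> complex" and a :: complex and r :: real
  assumes r: "r > 0" and q: "continuous_on (sphere a r) q"
  shows "\<exists>z\<in>sphere a r. r \<le> cmod (q z ^ 2 - (z - a))"
proof (rule ccontr)
  assume "\<not> ?thesis"
  then have close: "\<forall>z\<in>sphere a r. cmod (q z ^ 2 - (z - a)) < r" by (simp add: not_le)
  define \<gamma> where "\<gamma> t = a + of_real r * exp (\<i> * of_real t)" for t :: real
  have \<gamma>_sphere: "\<gamma> t \<in> sphere a r" for t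
    using r by (simp add: \<gamma>_def dist_norm norm_mult)
  have \<gamma>_minus: "\<gamma> t - a = of_real r * exp (\<i> * of_real t)" for t
    by (simp add: \<gamma>_def)
  \<comment> \<open>q divided by the branch of sqrt (z - a) along the circle that changes sign after one turn\<close>
  define Q where "Q t = q (\<gamma> t) / (of_real (sqrt r) * exp (\<i> * of_real t / 2))" for t
  have Q_square: "Q t ^ 2 = q (\<gamma> t) ^ 2 / (\<gamma> t - a)" for t
  proof -
    have "(of_real (sqrt r) * exp (\<i> * of_real t / 2)) ^ 2 = (of_real r * exp (\<i> * of_real t) :: complex)"
      using r by (simp add: power_mult_distrib flip: exp_of_nat_mult of_real_power)
    then show ?thesis by (simp add: Q_def \<gamma>_minus power_divide)
  qed
  have Re_Q_square_pos: "Re (Q t ^ 2) > 0" for t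
  proof -
    have nz: "\<gamma> t - a \<noteq> 0" using r by (simp add: \<gamma>_minus)
    have norm_r: "cmod (\<gamma> t - a) = r" using \<gamma>_sphere[of t] by (simp add: dist_norm norm_minus_commute)
    have "cmod (Q t ^ 2 - 1) = cmod (q (\<gamma> t) ^ 2 - (\<gamma> t - a)) / cmod (\<gamma> t - a)"
      using nz by (simp add: Q_square flip: norm_divide) (simp add: field_simps)
    also have "\<dots> < 1" using close \<gamma>_sphere[of t] norm_r r by simp
    finally have "cmod (Q t ^ 2 - 1) < 1" .
    with abs_Re_le_cmod[of "Q t ^ 2 - 1"] show ?thesis by simp
  qed
  have Re_Q_nonzero: "Re (Q t) \<noteq> 0" for t
  proof
    assume "Re (Q t) = 0"
    then have "Re (Q t ^ 2) = - (Im (Q t))\<^sup>2" by (simp add: power2_eq_square)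
    with Re_Q_square_pos[of t] show False by (smt (verit) zero_le_power2)
  qed
  have Q_turn: "Q (2 * pi) = - Q 0"
  proof -
    have "\<gamma> (2 * pi) = \<gamma> 0" using exp_two_pi_i by (simp add: \<gamma>_def mult.commute)
    moreover have "exp (\<i> * of_real (2 * pi) / 2) = -1" by (simp add: Euler)
    ultimately show ?thesis by (simp add: Q_def)
  qed
  have "continuous_on {0..2 * pi} (q \<circ> \<gamma>)"
    by (rule continuous_on_compose, unfold \<gamma>_def, intro continuous_intros)
       (rule continuous_on_subset[OF q], use \<gamma>_sphere in \<open>auto simp: \<gamma>_def\<close>)
  then have Re_Q_cont: "continuous_on {0..2 * pi} (\<lambda>t. Re (Q t))"
    unfolding Q_def using r by (intro continuous_intros) (auto simp: o_def)
  have "\<exists>t. 0 \<le> t \<and> t \<le> 2 * pi \<and> Re (Q t) = 0"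
  proof (cases "Re (Q 0) < 0")
    case True
    then show ?thesis using IVT'[of "\<lambda>t. Re (Q t)" 0 0 "2 * pi"] Re_Q_cont Q_turn by auto
  next
    case False
    with Re_Q_nonzero[of 0] have "Re (Q 0) > 0" by simp
    then show ?thesis using IVT2'[of "\<lambda>t. Re (Q t)" "2 * pi" 0 0] Re_Q_cont Q_turn by auto
  qed
  with Re_Q_nonzero show False by blast
qed

lemma no_approximate_unit_times_square_on_sphere:
  fixes W F :: "complex \<Rightarrow> complex" and a c :: complex and r :: real
  assumes r: "r > 0"
    and W: "continuous_on (cball a r) W" "\<And>z. z \<in> cball a r \<Longrightarrow> W z \<noteq> 0"
    and F: "continuous_on (sphere a r) F"
  shows "\<exists>z\<in>sphere a r. r \<le> cmod (c * (W z * F z ^ 2) - (z - a))"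
proof -
  obtain S where S: "continuous_on (cball a r) S" "\<And>z. z \<in> cball a r \<Longrightarrow> W z = S z ^ 2"
    using continuous_sqrt_on_contractible[OF W(1) convex_imp_contractible[OF convex_cball] W(2)]
    by blast
  have "continuous_on (sphere a r) (\<lambda>z. csqrt c * S z * F z)"
    by (intro continuous_intros F continuous_on_subset[OF S(1) sphere_cball])
  moreover have "c * (W z * F z ^ 2) = (csqrt c * S z * F z) ^ 2" if "z \<in> sphere a r" for z
    using that S(2) sphere_cball by (auto simp: power_mult_distrib)
  ultimately show ?thesis
    using no_approximate_sqrt_on_sphere[OF r] by (metis (no_types, lifting))
qed

lemma wcomp_funpow:
  "(wcomp \<omega> \<phi> ^^ n) f z = (\<Prod>k<n. \<omega> ((\<phi> ^^ k) z)) * f ((\<phi> ^^ n) z)"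
proof (induction n arbitrary: z)
  case 0
  then show ?case by simp
next
  case (Suc n)
  have "(wcomp \<omega> \<phi> ^^ Suc n) f z = \<omega> z * (wcomp \<omega> \<phi> ^^ n) f (\<phi> z)"
    by (simp add: wcomp_def)
  also have "\<dots> = (\<Prod>k<Suc n. \<omega> ((\<phi> ^^ k) z)) * f ((\<phi> ^^ Suc n) z)"
    by (simp add: Suc.IH prod.lessThan_Suc_shift funpow_swap1 del: prod.lessThan_Suc)
  finally show ?case .
qed

lemma continuous_on_funpow:
  assumes "continuous_on S \<phi>" and "\<phi> ` S \<subseteq> S"
  shows "continuous_on S (\<phi> ^^ n) \<and> (\<phi> ^^ n) ` S \<subseteq> S"
proof (induction n)
  case 0
  then show ?case by (simp add: continuous_on_id)
next
  case (Suc n)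
  then show ?case
    using continuous_on_compose2[OF assms(1)] assms(2) by (auto simp: image_subset_iff)
qed

lemma open_cball_avoiding_point:
  fixes z :: complex
  assumes "open S" and "z \<in> S"
  obtains a r where "r > 0" and "cball a r \<subseteq> S" and "r < dist z a"
proof -
  obtain \<delta> where \<delta>: "\<delta> > 0" "ball z \<delta> \<subseteq> S" using assms openE by blast
  define a where "a = z + of_real (\<delta> / 2)"
  have dist_za: "dist z a = \<delta> / 2" using \<delta> by (simp add: a_def dist_norm)
  have "cball a (\<delta> / 8) \<subseteq> ball z \<delta>"
  proof
    fix x assume "x \<in> cball a (\<delta> / 8)"
    then show "x \<in> ball z \<delta>" using dist_za \<delta>(1) dist_triangle[of z x a] by simp
  qed
  with \<delta> dist_za show ?thesis by (intro that[of "\<delta> / 8" a]) auto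
qed

lemma wcomp_funpow_square_far_from_translate:
  fixes \<Omega> :: "complex set" and \<omega> \<phi> f :: "complex \<Rightarrow> complex"
  assumes \<omega>: "continuous_on \<Omega> \<omega>" and \<phi>: "continuous_on \<Omega> \<phi>" "\<phi> ` \<Omega> \<subseteq> \<Omega>"
    and f: "continuous_on \<Omega> f"
    and r: "r > 0" and disc: "cball a r \<subseteq> \<Omega>" and far: "r < dist z1 a"
    and z1: "z1 \<in> \<Omega>" "(\<exists>z\<in>\<Omega>. \<omega> z = 0) \<Longrightarrow> \<omega> z1 = 0"
  shows "\<exists>z\<in>sphere a r \<union> {z1}. r \<le> cmod (c * (wcomp \<omega> \<phi> ^^ n) (\<lambda>z. f z * f z) z - (z - a))"
proof (rule ccontr)
  assume "\<not> ?thesis"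
  then have approx: "\<forall>z\<in>sphere a r \<union> {z1}.
      cmod (c * (wcomp \<omega> \<phi> ^^ n) (\<lambda>z. f z * f z) z - (z - a)) < r"
    by (simp add: not_le)
  define W where "W z = (\<Prod>k<n. \<omega> ((\<phi> ^^ k) z))" for z
  have iterate: "(wcomp \<omega> \<phi> ^^ n) (\<lambda>z. f z * f z) z = W z * f ((\<phi> ^^ n) z) ^ 2" for z
    by (simp add: wcomp_funpow W_def power2_eq_square)
  have \<phi>_iterates: "continuous_on \<Omega> (\<phi> ^^ k)" "(\<phi> ^^ k) ` \<Omega> \<subseteq> \<Omega>" for k
    using continuous_on_funpow[OF \<phi>] by auto
  show False
  proof (cases "\<exists>z\<in>cball a r. W z = 0")
    case True
    then obtain z k where "z \<in> \<Omega>" "k < n" "\<omega> ((\<phi> ^^ k) z) = 0"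
      using disc by (auto simp: W_def)
    then have "\<omega> z1 = 0"
      using z1 \<phi>_iterates(2) by blast
    with \<open>k < n\<close> have "W z1 = 0"
      by (auto simp: W_def intro!: bexI[of _ 0])
    then have "dist a z1 < r"
      using approx by (simp add: iterate dist_norm)
    with far show False by (simp add: dist_commute)
  next
    case False
    have "continuous_on \<Omega> W"
      unfolding W_def using \<omega> \<phi>_iterates
      by (intro continuous_on_prod, rule continuous_on_compose2[of \<Omega> \<omega>])
    then have W: "continuous_on (cball a r) W"
      using disc by (rule continuous_on_subset)
    have "continuous_on \<Omega> (\<lambda>z. f ((\<phi> ^^ n) z))"
      using f \<phi>_iterates by (rule continuous_on_compose2[of \<Omega> f])
    then have F: "continuous_on (sphere a r) (\<lambda>z. f ((\<phi> ^^ n) z))"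
      by (rule continuous_on_subset) (use disc sphere_cball in blast)
    obtain z where "z \<in> sphere a r"
        "r \<le> cmod (c * (W z * f ((\<phi> ^^ n) z) ^ 2) - (z - a))"
      using no_approximate_unit_times_square_on_sphere[OF r W _ F] False by blast
    moreover have "cmod (c * (W z * f ((\<phi> ^^ n) z) ^ 2) - (z - a)) < r"
      using approx \<open>z \<in> sphere a r\<close> by (simp add: iterate)
    ultimately show False by simp
  qed
qed

lemma wcomp_square_not_supercyclic:
  fixes \<Omega> :: "complex set" and \<omega> \<phi> f :: "complex \<Rightarrow> complex"
  assumes "open \<Omega>" and "\<Omega> \<noteq> {}"
    and "continuous_on \<Omega> \<omega>" and "continuous_on \<Omega> \<phi>" "\<phi> ` \<Omega> \<subseteq> \<Omega>"
    and "continuous_on \<Omega> f"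
  shows "\<not> supercyclic \<Omega> (wcomp \<omega> \<phi>) (\<lambda>z. f z * f z)"
proof
  assume "supercyclic \<Omega> (wcomp \<omega> \<phi>) (\<lambda>z. f z * f z)"
  then have dense: "\<And>g K e. g holomorphic_on \<Omega> \<Longrightarrow> compact K \<Longrightarrow> K \<subseteq> \<Omega> \<Longrightarrow> e > 0 \<Longrightarrow>
      \<exists>c n. \<forall>z\<in>K. cmod (c * (wcomp \<omega> \<phi> ^^ n) (\<lambda>z. f z * f z) z - g z) < e"
    unfolding supercyclic_def dense_H_def by fastforce
  obtain z1 where z1: "z1 \<in> \<Omega>" "(\<exists>z\<in>\<Omega>. \<omega> z = 0) \<Longrightarrow> \<omega> z1 = 0"
    using \<open>\<Omega> \<noteq> {}\<close> by blast
  obtain a r where r: "r > 0" and disc: "cball a r \<subseteq> \<Omega>" and far: "r < dist z1 a"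
    using open_cball_avoiding_point[OF \<open>open \<Omega>\<close> z1(1)] by blast
  have "compact (sphere a r \<union> {z1})" "sphere a r \<union> {z1} \<subseteq> \<Omega>"
    using disc z1(1) sphere_cball by auto
  moreover have "(\<lambda>z. z - a) holomorphic_on \<Omega>"
    by (intro holomorphic_intros)
  ultimately obtain c n where "\<forall>z\<in>sphere a r \<union> {z1}.
      cmod (c * (wcomp \<omega> \<phi> ^^ n) (\<lambda>z. f z * f z) z - (z - a)) < r"
    using dense r by blast
  with wcomp_funpow_square_far_from_translate[OF assms(3-6) r disc far z1] show False
    by (meson not_le)
qed

theorem theorem22:
  fixes \<Omega> :: "complex set" and \<omega> \<phi> :: "complex \<Rightarrow> complex"
  assumes "open \<Omega>" and "connected \<Omega>" and "\<Omega> \<noteq> {}"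
    and "\<omega> holomorphic_on \<Omega>"
    and "\<phi> holomorphic_on \<Omega>" and "\<phi> ` \<Omega> \<subseteq> \<Omega>"
  shows "\<not> supports_supercyclic_algebra \<Omega> (wcomp \<omega> \<phi>)"
proof
  assume "supports_supercyclic_algebra \<Omega> (wcomp \<omega> \<phi>)"
  then obtain A f z0 where A: "subalgebra_H \<Omega> A" and "f \<in> A" "z0 \<in> \<Omega>" "f z0 \<noteq> 0"
    and A_supercyclic: "\<forall>g\<in>A. (\<exists>z\<in>\<Omega>. g z \<noteq> 0) \<longrightarrow> supercyclic \<Omega> (wcomp \<omega> \<phi>) g"
    unfolding supports_supercyclic_algebra_def by blast
  have "(\<lambda>z. f z * f z) \<in> A"
    using A \<open>f \<in> A\<close> by (simp add: subalgebra_H_def)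
  then have "supercyclic \<Omega> (wcomp \<omega> \<phi>) (\<lambda>z. f z * f z)"
    using \<open>z0 \<in> \<Omega>\<close> \<open>f z0 \<noteq> 0\<close> A_supercyclic by auto
  moreover have "continuous_on \<Omega> f"
    using A \<open>f \<in> A\<close> by (simp add: subalgebra_H_def holomorphic_on_imp_continuous_on)
  ultimately show False
    using wcomp_square_not_supercyclic[OF \<open>open \<Omega>\<close> \<open>\<Omega> \<noteq> {}\<close>]
      holomorphic_on_imp_continuous_on assms(4-6) by blast
qed

end
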